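(* Let $C$ be an $E$-linear code of length $2n$. Then: (1) if $C$ is free, $LSHull(C^{\perp_{S_L}})=LSHull(C)$; (2) if $C_{Res}\cap (C_{Tor})^{\perp_S}=\{0\}$ and $C_{Tor}=\mathbb{F}_2^{2n}$, then $RSHull(C^{\perp_{S_R}})=RSHull(C)$; (3) $SHull(C^{\perp_S})=SHull(C)$.
   Context: $E=\langle \kappa,\tau \mid 2\kappa=2\tau=0,\ \kappa^2=\kappa,\ \tau^2=\tau,\ \kappa\tau=\kappa,\ \tau\kappa=\tau\rangle$ is the non-unital ring $\{0,\kappa,\tau,\zeta\}$, $\zeta=\kappa+\tau$, with $e\kappa=e\tau=e$, $e\zeta=0$ for all $e\in E$. Every $e\in E$ is uniquely $u\kappa+v\zeta$ ($u,v\in\mathbb{F}_2$); $\pi(u\kappa+v\zeta)=u$, componentwise. An $E$-linear code of length $2n$ is a left $E$-submodule $C\subseteq E^{2n}$; $C_{Res}=\pi(C)$, $C_{Tor}=\{v\in\mathbb{F}_2^{2n}:\zeta v\in C\}$ (componentwise, $0\cdot\zeta=0,1\cdot\zeta=\zeta$); $C$ is free if $C_{Res}=C_{Tor}$. Symplectic inner product (over $E$ or $\mathbb{F}_2$): $\langle (u|v),(u'|v')\rangle_s=\sum_i u_iv'_i+\sum_i v_iu'_i$; for binary $B$, $B^{\perp_S}=\{z:\langle z,w\rangle_s=0\ \forall w\in B\}$. For $E$-linear $C$: $C^{\perp_{S_L}}=\{z\in E^{2n}:\langle z,w\rangle_s=0\ \forall w\in C\}$, $C^{\perp_{S_R}}=\{z\in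 E^{2n}:\langle w,z\rangle_s=0\ \forall w\in C\}$, $C^{\perp_S}=C^{\perp_{S_L}}\cap C^{\perp_{S_R}}$, $LSHull(C)=C\cap C^{\perp_{S_L}}$, $RSHull(C)=C\cap C^{\perp_{S_R}}$, $SHull(C)=C\cap C^{\perp_S}$. *)

theory Defs
  imports Main "HOL-Library.Z2"
begin

text \<open>The non-unital ring E = {0, kappa, tau, zeta}, zeta = kappa + tau.\<close>
datatype EE = E0 | Kap | Tau | Zet

instantiation EE :: "{zero, plus, times}"
begin
definition zero_EE :: EE where "zero_EE = E0"
fun plus_EE :: "EE \<Rightarrow> EE \<Rightarrow> EE" where
  "plus_EE E0 y = y"
| "plus_EE x E0 = x"
| "plus_EE Kap Kap = E0" | "plus_EE Kap Tau = Zet" | "plus_EE Kap Zet = Tau"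
| "plus_EE Tau Kap = Zet" | "plus_EE Tau Tau = E0" | "plus_EE Tau Zet = Kap"
| "plus_EE Zet Kap = Tau" | "plus_EE Zet Tau = Kap" | "plus_EE Zet Zet = E0"
fun times_EE :: "EE \<Rightarrow> EE \<Rightarrow> EE" where
  "times_EE e Kap = e"
| "times_EE e Tau = e"
| "times_EE e Zet = E0"
| "times_EE e E0 = E0"
instance ..
end

instance EE :: comm_monoid_add
proof
  fix a b c :: EE
  show "a + b + c = a + (b + c)" by (cases a; cases b; cases c) (simp_all add: zero_EE_def)
  show "a + b = b + a" by (cases a; cases b) (simp_all add: zero_EE_def)
  show "0 + a = a" by (cases a) (simp_all add: zero_EE_def)
qed

text \<open>pi(u kappa + v zeta) = u. kappa = 1 kappa + 0 zeta, tau = 1 kappa + 1 zeta.\<close>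
fun piE :: "EE \<Rightarrow> bit" where
  "piE E0 = 0" | "piE Kap = 1" | "piE Tau = 1" | "piE Zet = 0"

text \<open>Scalar action of zeta on a binary entry: 0 zeta = 0, 1 zeta = zeta.\<close>
definition zeta_mult :: "bit \<Rightarrow> EE" where
  "zeta_mult b = (if b = 1 then Zet else E0)"

definition vecs :: "nat \<Rightarrow> 'a list set" where
  "vecs n = {x. length x = 2 * n}"

definition symp :: "nat \<Rightarrow> ('a::{comm_monoid_add,times}) list \<Rightarrow> 'a list \<Rightarrow> 'a" where
  "symp n x y = (\<Sum>i<n. x ! i * y ! (n + i)) + (\<Sum>i<n. x ! (n + i) * y ! i)"

definition E_linear :: "nat \<Rightarrow> EE list set \<Rightarrow> bool" where
  "E_linear n C \<longleftrightarrow> C \<subseteq> vecs n \<and> replicate (2 * n) 0 \<in> C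
     \<and> (\<forall>x\<in>C. \<forall>y\<in>C. map2 (+) x y \<in> C)
     \<and> (\<forall>e. \<forall>x\<in>C. map (\<lambda>c. e * c) x \<in> C)"

definition C_Res :: "EE list set \<Rightarrow> bit list set" where
  "C_Res C = map piE ` C"

definition C_Tor :: "nat \<Rightarrow> EE list set \<Rightarrow> bit list set" where
  "C_Tor n C = {v \<in> vecs n. map zeta_mult v \<in> C}"

definition free_code :: "nat \<Rightarrow> EE list set \<Rightarrow> bool" where
  "free_code n C \<longleftrightarrow> C_Res C = C_Tor n C"

definition bin_perpS :: "nat \<Rightarrow> bit list set \<Rightarrow> bit list set" where
  "bin_perpS n B = {z \<in> vecs n. \<forall>w\<in>B. symp n z w = 0}"

definition perpSL :: "nat \<Rightarrow> EE list set \<Rightarrow> EE list set" where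
  "perpSL n C = {z \<in> vecs n. \<forall>w\<in>C. symp n z w = 0}"

definition perpSR :: "nat \<Rightarrow> EE list set \<Rightarrow> EE list set" where
  "perpSR n C = {z \<in> vecs n. \<forall>w\<in>C. symp n w z = 0}"

definition perpS :: "nat \<Rightarrow> EE list set \<Rightarrow> EE list set" where
  "perpS n C = perpSL n C \<inter> perpSR n C"

definition LSHull :: "nat \<Rightarrow> EE list set \<Rightarrow> EE list set" where
  "LSHull n C = C \<inter> perpSL n C"

definition RSHull :: "nat \<Rightarrow> EE list set \<Rightarrow> EE list set" where
  "RSHull n C = C \<inter> perpSR n C"

definition SHull :: "nat \<Rightarrow> EE list set \<Rightarrow> EE list set" where
  "SHull n C = C \<inter> perpS n C"

end

theory Submission
  imports Defs
begin

(* Writing e = u kappa + v zeta as the pair (pi e, nu e) identifies E with F_2^2, and an E-linear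
   code C with the pair R = C_Res, T = C_Tor: C consists of the vectors x with pi x in R and
   nu x in T, and R is contained in T. Since pi(ab) = pi a pi b and nu(ab) = nu a pi b, the
   E-valued symplectic form splits into <pi x, pi y> and <nu x, pi y>, so the three duals of C
   are again of this shape, with pairs (R^perp, R^perp), (T^perp, F_2^2n) and (T^perp, R^perp).
   Binary double duality B^perp^perp = B then gives C^perp^perp = C, and C^perp_L^perp_L = C when
   R = T; when T = F_2^2n, the right dual (0, F_2^2n) is a subcode of C which is its own right
   dual. Each identity follows because every hull is D \<inter> D^perp. *)

(* HOL-Library.Z2 rewrites + and * on bits to xor and and, which blocks ring reasoning. *)
declare add_bit_eq_xor [simp del] mult_bit_eq_and [simp del]

lemma bit_cases: "(a::bit) = 0 \<or> a = 1"
  using bit_not_zero_iff by blast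

lemma bit_add_self [simp]: "(a::bit) + a = 0"
  by (simp flip: mult_2)

section \<open>Separation by dot products in F_2^m\<close>

definition dot :: "bit list \<Rightarrow> bit list \<Rightarrow> bit" where
  "dot c v = (\<Sum>i<length v. c ! i * v ! i)"

lemma dot_Cons [simp]: "dot (a # c) (b # v) = a * b + dot c v"
  unfolding dot_def by (simp only: length_Cons sum.lessThan_Suc_shift nth_Cons_0 nth_Cons_Suc)

lemma dot_replicate_zero [simp]: "dot (replicate (length v) 0) v = 0"
  unfolding dot_def by simp

lemma dot_add_scaled:
  assumes "length u = length v"
  shows "dot c (map2 (+) u (map ((*) a) v)) = dot c u + a * dot c v"
  using assms unfolding dot_def
  by (simp add: sum.distrib sum_distrib_left algebra_simps)

definition bin_subspace :: "nat \<Rightarrow> bit list set \<Rightarrow> bool" where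
  "bin_subspace m A \<longleftrightarrow> (\<forall>v\<in>A. length v = m) \<and> replicate m 0 \<in> A
     \<and> (\<forall>u\<in>A. \<forall>v\<in>A. map2 (+) u v \<in> A)"

lemma bin_subspace_nonempty: "bin_subspace m A \<Longrightarrow> A \<noteq> {}"
  unfolding bin_subspace_def by auto

lemma bin_subspace_scale:
  assumes "bin_subspace m A" "v \<in> A"
  shows "map ((*) a) v \<in> A"
proof -
  have "replicate m 0 \<in> A" "length v = m"
    using assms unfolding bin_subspace_def by auto
  moreover have "map ((*) a) v = (if a = 0 then replicate (length v) 0 else v)"
    using bit_cases[of a] by (intro nth_equalityI) auto
  ultimately show ?thesis using assms(2) by simp
qed

lemma bin_subspace_shorten:
  assumes "bin_subspace (Suc m) A"
  shows "bin_subspace m {v. 0 # v \<in> A}"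
proof -
  have "map2 (+) (0 # u) (0 # v) = 0 # map2 (+) u v" for u v :: "bit list"
    by simp
  then show ?thesis
    using assms unfolding bin_subspace_def by (auto simp del: list.map zip_Cons_Cons) fastforce+
qed

text \<open>A vector 1 # w of A lets every a # v of A be moved into the shortened subspace, so a
  functional c vanishing there extends to the functional dot c w # c vanishing on A.\<close>

lemma bin_subspace_pivot_shift:
  assumes "bin_subspace (Suc m) A" "1 # w \<in> A" "a # v \<in> A"
  shows "0 # map2 (+) v (map ((*) a) w) \<in> A"
proof -
  have "map2 (+) (a # v) (map ((*) a) (1 # w)) \<in> A"
    using assms bin_subspace_scale[OF assms(1,2)] unfolding bin_subspace_def by blast
  then show ?thesis by simp
qed

lemma dot_extend_pivot:
  assumes "bin_subspace (Suc m) A" "1 # w \<in> A" "\<forall>v. 0 # v \<in> A \<longrightarrow> dot c v = 0"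
  shows "\<forall>v\<in>A. dot (dot c w # c) v = 0"
proof
  fix v assume "v \<in> A"
  moreover obtain a v' where v: "v = a # v'"
    using assms(1) \<open>v \<in> A\<close> unfolding bin_subspace_def by (cases v) auto
  moreover have "length (a # v') = length (1 # w)"
    using assms(1,2) \<open>v \<in> A\<close> v unfolding bin_subspace_def by metis
  then have "length v' = length w" by simp
  ultimately show "dot (dot c w # c) v = 0"
    using assms(3) bin_subspace_pivot_shift[OF assms(1,2)] dot_add_scaled[of v' w c a]
    by (simp add: ac_simps)
qed

lemma dot_separation:
  assumes "bin_subspace m A" "length x = m" "x \<notin> A"
  shows "\<exists>c. length c = m \<and> (\<forall>v\<in>A. dot c v = 0) \<and> dot c x = 1"
  using assms
proof (induction m arbitrary: A x)
  case 0
  then show ?case by (simp add: bin_subspace_def)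
next
  case (Suc m)
  define A' where "A' = {v. 0 # v \<in> A}"
  have A': "bin_subspace m A'"
    unfolding A'_def by (rule bin_subspace_shorten[OF Suc.prems(1)])
  obtain b x' where x: "x = b # x'" and len_x': "length x' = m"
    using Suc.prems(2) by (cases x) auto
  show ?case
  proof (cases "\<exists>w. 1 # w \<in> A")
    case True
    then obtain w where w: "1 # w \<in> A" by blast
    have len_w: "length w = m"
      using Suc.prems(1) w unfolding bin_subspace_def by fastforce
    define y where "y = map2 (+) x' (map ((*) b) w)"
    have "y \<notin> A'"
    proof
      assume "y \<in> A'"
      then have "map2 (+) (0 # y) (map ((*) b) (1 # w)) \<in> A"
        using Suc.prems(1) bin_subspace_scale[OF Suc.prems(1) w]
        unfolding A'_def bin_subspace_def by blast
      moreover have "map2 (+) (0 # y) (map ((*) b) (1 # w)) = x"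
        unfolding y_def using x len_x' len_w by (auto intro!: nth_equalityI simp: add.assoc)
      ultimately show False using Suc.prems(3) by simp
    qed
    moreover have "length y = m" unfolding y_def using len_x' len_w by simp
    ultimately obtain c where c: "length c = m" "\<forall>v\<in>A'. dot c v = 0" "dot c y = 1"
      using Suc.IH[OF A'] by blast
    have "\<forall>v\<in>A. dot (dot c w # c) v = 0"
      using dot_extend_pivot[OF Suc.prems(1) w] c(2) unfolding A'_def by blast
    moreover have "dot (dot c w # c) x = 1"
      using c(3) dot_add_scaled[of x' w c b] x len_x' len_w unfolding y_def by (simp add: ac_simps)
    ultimately show ?thesis using c(1) by (intro exI[of _ "dot c w # c"]) simp
  next
    case False
    have head_0: "\<exists>v'. v = 0 # v' \<and> v' \<in> A' \<and> length v' = m" if "v \<in> A" for v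
    proof -
      obtain a v' where v: "v = a # v'" "length v' = m"
        using \<open>v \<in> A\<close> Suc.prems(1) unfolding bin_subspace_def by (cases v) auto
      then have "a = 0" using \<open>v \<in> A\<close> False bit_cases[of a] by auto
      with v \<open>v \<in> A\<close> show ?thesis unfolding A'_def by auto
    qed
    show ?thesis
    proof (cases "b = 1")
      case True
      have "\<forall>v\<in>A. dot (1 # replicate m 0) v = 0"
        using head_0 by (metis dot_Cons dot_replicate_zero mult_zero_right add_0)
      moreover have "dot (1 # replicate m 0) x = 1"
        using True x len_x' by (metis dot_Cons dot_replicate_zero mult_1 add_0_right)
      ultimately show ?thesis by (intro exI[of _ "1 # replicate m 0"]) simp
    next
      case False
      then have "x' \<notin> A'"
        using bit_cases[of b] x Suc.prems(3) unfolding A'_def by auto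
      then obtain c where c: "length c = m" "\<forall>v\<in>A'. dot c v = 0" "dot c x' = 1"
        using Suc.IH[OF A' len_x'] by blast
      have "\<forall>v\<in>A. dot (0 # c) v = 0"
        using head_0 c(2) by (metis dot_Cons mult_zero_left add_0)
      moreover have "dot (0 # c) x = 1"
        using False bit_cases[of b] x c(3) by simp
      ultimately show ?thesis using c(1) by (intro exI[of _ "0 # c"]) simp
    qed
  qed
qed

section \<open>The binary symplectic dual\<close>

lemma sum_lessThan_add_nat:
  fixes f :: "nat \<Rightarrow> 'a::comm_monoid_add"
  shows "(\<Sum>i<m + k. f i) = (\<Sum>i<m. f i) + (\<Sum>i<k. f (m + i))"
  by (induction k) (simp_all add: add.assoc)

lemma symp_eq_dot:
  assumes "length z = 2 * n" "length (w::bit list) = 2 * n"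
  shows "symp n z w = dot (drop n z @ take n z) w"
proof -
  let ?c = "drop n z @ take n z"
  have "dot ?c w = (\<Sum>i<n. ?c ! i * w ! i) + (\<Sum>i<n. ?c ! (n + i) * w ! (n + i))"
    unfolding dot_def using assms by (simp add: mult_2 sum_lessThan_add_nat)
  also have "(\<Sum>i<n. ?c ! i * w ! i) = (\<Sum>i<n. z ! (n + i) * w ! i)"
    using assms by (intro sum.cong) (auto simp: nth_append)
  also have "(\<Sum>i<n. ?c ! (n + i) * w ! (n + i)) = (\<Sum>i<n. z ! i * w ! (n + i))"
    using assms by (intro sum.cong) (auto simp: nth_append)
  finally show ?thesis unfolding symp_def by (simp add: add.commute)
qed

lemma symp_commute: "symp n (x::bit list) y = symp n y x"
  unfolding symp_def by (simp add: mult.commute add.commute)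

lemma bin_subspace_subset_vecs: "bin_subspace (2 * n) A \<Longrightarrow> A \<subseteq> vecs n"
  unfolding bin_subspace_def vecs_def by auto

lemma bin_perpS_subset_vecs: "bin_perpS n A \<subseteq> vecs n"
  unfolding bin_perpS_def by auto

lemma bin_perpS_antimono: "A \<subseteq> B \<Longrightarrow> bin_perpS n B \<subseteq> bin_perpS n A"
  unfolding bin_perpS_def by auto

lemma zero_in_bin_perpS: "replicate (2 * n) 0 \<in> bin_perpS n A"
  unfolding bin_perpS_def vecs_def symp_def by (auto intro!: sum.neutral)

lemma bin_perpS_nonempty: "bin_perpS n A \<noteq> {}"
  using zero_in_bin_perpS by blast

lemma bin_perpS_bin_perpS:
  assumes "bin_subspace (2 * n) A"
  shows "bin_perpS n (bin_perpS n A) = A"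
proof (intro equalityI subsetI)
  fix x assume "x \<in> A"
  then show "x \<in> bin_perpS n (bin_perpS n A)"
    using assms unfolding bin_perpS_def bin_subspace_def vecs_def by (auto simp: symp_commute)
next
  fix x assume x: "x \<in> bin_perpS n (bin_perpS n A)"
  have len_x: "length x = 2 * n" using x unfolding bin_perpS_def vecs_def by blast
  show "x \<in> A"
  proof (rule ccontr)
    assume "x \<notin> A"
    then obtain c where c: "length c = 2 * n" "\<forall>v\<in>A. dot c v = 0" "dot c x = 1"
      using dot_separation[OF assms len_x] by blast
    define y where "y = drop n c @ take n c"
    have len_y: "length y = 2 * n" and c_y: "drop n y @ take n y = c"
      using c(1) unfolding y_def by simp_all
    have "y \<in> bin_perpS n A"
      using assms c(2) symp_eq_dot[OF len_y] c_y len_y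
      unfolding bin_perpS_def bin_subspace_def vecs_def by auto
    then have "symp n y x = 0"
      using x symp_commute unfolding bin_perpS_def by auto
    moreover have "symp n y x = 1"
      using symp_eq_dot[OF len_y len_x] c_y c(3) by simp
    ultimately show False by simp
  qed
qed

lemma vecs_nonempty: "vecs n \<noteq> {}"
  unfolding vecs_def by (auto intro: exI[of _ "replicate (2 * n) undefined"])

lemma bin_subspace_zero: "bin_subspace (2 * n) {replicate (2 * n) 0}"
  unfolding bin_subspace_def by (auto intro!: nth_equalityI)

lemma bin_perpS_zero: "bin_perpS n {replicate (2 * n) 0} = vecs n"
  unfolding bin_perpS_def vecs_def symp_def by (auto intro!: sum.neutral)

lemma bin_perpS_vecs: "bin_perpS n (vecs n) = {replicate (2 * n) 0}"
  using bin_perpS_bin_perpS[OF bin_subspace_zero] by (simp add: bin_perpS_zero)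

section \<open>Coordinates on E\<close>

text \<open>The zeta-coordinate: every e is piE e kappa + nuE e zeta.\<close>

fun nuE :: "EE \<Rightarrow> bit" where
  "nuE E0 = 0" | "nuE Kap = 0" | "nuE Tau = 1" | "nuE Zet = 1"

lemma piE_zero [simp]: "piE 0 = 0" and nuE_zero [simp]: "nuE 0 = 0"
  by (simp_all add: zero_EE_def)

lemma piE_add: "piE (a + b) = piE a + piE b"
  and nuE_add: "nuE (a + b) = nuE a + nuE b"
  by (cases a; cases b; simp add: zero_EE_def)+

lemma piE_mult: "piE (a * b) = piE a * piE b"
  and nuE_mult: "nuE (a * b) = nuE a * piE b"
  by (cases a; cases b; simp)+

lemma EE_eq_zero_iff: "e = 0 \<longleftrightarrow> piE e = 0 \<and> nuE e = 0"
  by (cases e) (simp_all add: zero_EE_def)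

lemma EE_exists_coordinates: "\<exists>e. piE e = a \<and> nuE e = b"
  using bit_cases[of a] bit_cases[of b] piE.simps nuE.simps by metis

lemma lists_exist_coordinates:
  "length u = length v \<Longrightarrow> \<exists>x. map piE x = u \<and> map nuE x = v"
proof (induction u arbitrary: v)
  case (Cons a u)
  then obtain b v' where "v = b # v'" "length u = length v'" by (cases v) auto
  moreover obtain e where "piE e = a" "nuE e = b" using EE_exists_coordinates by blast
  moreover obtain x where "map piE x = u" "map nuE x = v'" using Cons.IH calculation(2) by blast
  ultimately show ?case by (intro exI[of _ "e # x"]) simp
qed simp

lemma add_Kap_mult: "e + Kap * e = zeta_mult (nuE e)"
  by (cases e) (simp_all add: zeta_mult_def zero_EE_def)

lemma Kap_mult_add_zeta_mult: "piE a = piE e \<Longrightarrow> Kap * a + zeta_mult (nuE e) = e"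
  by (cases a; cases e) (simp_all add: zeta_mult_def zero_EE_def)

lemma Zet_mult: "Zet * e = zeta_mult (piE e)"
  by (cases e) (simp_all add: zeta_mult_def zero_EE_def)

lemma zeta_mult_zero: "zeta_mult 0 = 0"
  and zeta_mult_add: "zeta_mult (a + b) = zeta_mult a + zeta_mult b"
  using bit_cases[of a] bit_cases[of b] by (auto simp: zeta_mult_def zero_EE_def)

lemma symp_piE:
  assumes "length x = 2 * n" "length y = 2 * n"
  shows "piE (symp n x y) = symp n (map piE x) (map piE y)"
  unfolding symp_def piE_add sum_comp_morphism[of piE, OF piE_zero piE_add, symmetric]
  using assms by (simp add: piE_mult)

lemma symp_nuE:
  assumes "length x = 2 * n" "length y = 2 * n"
  shows "nuE (symp n x y) = symp n (map nuE x) (map piE y)"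
  unfolding symp_def nuE_add sum_comp_morphism[of nuE, OF nuE_zero nuE_add, symmetric]
  using assms by (simp add: nuE_mult)

lemma symp_eq_zero_iff:
  assumes "length x = 2 * n" "length y = 2 * n"
  shows "symp n x y = 0 \<longleftrightarrow>
    symp n (map piE x) (map piE y) = 0 \<and> symp n (map nuE x) (map piE y) = 0"
  using EE_eq_zero_iff symp_piE[OF assms] symp_nuE[OF assms] by metis

section \<open>E-linear codes as pairs of binary codes\<close>

definition E_code :: "nat \<Rightarrow> bit list set \<Rightarrow> bit list set \<Rightarrow> EE list set" where
  "E_code n R T = {x \<in> vecs n. map piE x \<in> R \<and> map nuE x \<in> T}"

lemma E_code_inter: "E_code n A B \<inter> E_code n A' B' = E_code n (A \<inter> A') (B \<inter> B')"
  unfolding E_code_def by auto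

lemma E_code_subset_vecs: "E_code n A B \<subseteq> vecs n"
  unfolding E_code_def by auto

lemma E_code_exists_coordinates:
  assumes "A \<subseteq> vecs n" "B \<subseteq> vecs n" "u \<in> A" "v \<in> B"
  shows "\<exists>x\<in>E_code n A B. map piE x = u \<and> map nuE x = v"
proof -
  have "length u = 2 * n" "length v = 2 * n"
    using assms unfolding vecs_def by auto
  then obtain x where x: "map piE x = u" "map nuE x = v"
    using lists_exist_coordinates by (metis)
  then have "length x = 2 * n"
    using \<open>length u = 2 * n\<close> length_map by metis
  with x assms(3,4) show ?thesis
    unfolding E_code_def vecs_def by auto
qed

lemma ball_E_code_piE:
  assumes "A \<subseteq> vecs n" "B \<subseteq> vecs n" "B \<noteq> {}"
  shows "(\<forall>w\<in>E_code n A B. Q (map piE w)) \<longleftrightarrow> (\<forall>u\<in>A. Q u)"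
  using E_code_exists_coordinates[OF assms(1,2)] assms(3) unfolding E_code_def by fastforce

lemma ball_E_code_nuE:
  assumes "A \<subseteq> vecs n" "B \<subseteq> vecs n" "A \<noteq> {}"
  shows "(\<forall>w\<in>E_code n A B. Q (map nuE w)) \<longleftrightarrow> (\<forall>v\<in>B. Q v)"
  using E_code_exists_coordinates[OF assms(1,2)] assms(3) unfolding E_code_def by fastforce

lemma E_linear_eq_E_code:
  assumes "E_linear n C"
  shows "C = E_code n (C_Res C) (C_Tor n C)"
proof (intro equalityI subsetI)
  have len: "length x = 2 * n" if "x \<in> C" for x
    using assms that unfolding E_linear_def vecs_def by auto
  fix x assume x: "x \<in> C"
  have "map2 (+) x (map ((*) Kap) x) \<in> C"
    using assms x unfolding E_linear_def by blast
  moreover have "map2 (+) x (map ((*) Kap) x) = map zeta_mult (map nuE x)"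
    by (induction x) (simp_all add: add_Kap_mult)
  ultimately show "x \<in> E_code n (C_Res C) (C_Tor n C)"
    using x len[OF x] unfolding E_code_def C_Res_def C_Tor_def vecs_def by auto
next
  fix x assume x: "x \<in> E_code n (C_Res C) (C_Tor n C)"
  then obtain y where y: "y \<in> C" "map piE y = map piE x" and len: "length x = 2 * n"
    and tor: "map zeta_mult (map nuE x) \<in> C"
    unfolding E_code_def C_Res_def C_Tor_def vecs_def by auto
  have "map2 (+) (map ((*) Kap) y) (map zeta_mult (map nuE x)) \<in> C"
    using assms y(1) tor unfolding E_linear_def by blast
  moreover have "map2 (+) (map ((*) Kap) y) (map zeta_mult (map nuE x)) = x"
  proof (rule nth_equalityI)
    have "length y = length x" using arg_cong[OF y(2), of length] by simp
    then show "length (map2 (+) (map ((*) Kap) y) (map zeta_mult (map nuE x))) = length x"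
      by simp
    fix i assume "i < length (map2 (+) (map ((*) Kap) y) (map zeta_mult (map nuE x)))"
    with \<open>length y = length x\<close> have "piE (y ! i) = piE (x ! i)"
      using y(2) by (metis length_map nth_map map_fst_zip)
    with \<open>length y = length x\<close> \<open>i < _\<close>
    show "map2 (+) (map ((*) Kap) y) (map zeta_mult (map nuE x)) ! i = x ! i"
      by (simp add: Kap_mult_add_zeta_mult)
  qed
  ultimately show "x \<in> C" by simp
qed

lemma bin_subspace_C_Res:
  assumes "E_linear n C"
  shows "bin_subspace (2 * n) (C_Res C)"
  unfolding bin_subspace_def
proof (intro conjI ballI)
  have C: "C \<subseteq> vecs n" "replicate (2 * n) 0 \<in> C" "\<forall>x\<in>C. \<forall>y\<in>C. map2 (+) x y \<in> C"
    using assms unfolding E_linear_def by blast+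
  show "length u = 2 * n" if "u \<in> C_Res C" for u
    using that C(1) unfolding C_Res_def vecs_def by auto
  have "map piE (replicate (2 * n) 0) = replicate (2 * n) 0" by simp
  then show "replicate (2 * n) 0 \<in> C_Res C"
    using C(2) unfolding C_Res_def by (metis image_eqI)
  fix u v assume "u \<in> C_Res C" "v \<in> C_Res C"
  then obtain x y where "x \<in> C" "y \<in> C" "u = map piE x" "v = map piE y"
    unfolding C_Res_def by blast
  moreover have "map piE (map2 (+) x y) = map2 (+) (map piE x) (map piE y)"
    by (simp add: piE_add zip_map1 zip_map2 case_prod_beta)
  ultimately show "map2 (+) u v \<in> C_Res C"
    using C(3) unfolding C_Res_def by (metis image_eqI)
qed

lemma bin_subspace_C_Tor:
  assumes "E_linear n C"
  shows "bin_subspace (2 * n) (C_Tor n C)"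
  unfolding bin_subspace_def
proof (intro conjI ballI)
  have C: "replicate (2 * n) 0 \<in> C" "\<forall>x\<in>C. \<forall>y\<in>C. map2 (+) x y \<in> C"
    using assms unfolding E_linear_def by blast+
  show "length u = 2 * n" if "u \<in> C_Tor n C" for u
    using that unfolding C_Tor_def vecs_def by auto
  have "map zeta_mult (replicate (2 * n) 0) = replicate (2 * n) 0"
    by (simp add: zeta_mult_zero)
  then show "replicate (2 * n) 0 \<in> C_Tor n C"
    using C(1) unfolding C_Tor_def vecs_def by (simp add: zeta_mult_zero)
  fix u v assume "u \<in> C_Tor n C" "v \<in> C_Tor n C"
  moreover have "map zeta_mult (map2 (+) u v) = map2 (+) (map zeta_mult u) (map zeta_mult v)"
    by (simp add: zeta_mult_add zip_map1 zip_map2 case_prod_beta)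
  ultimately show "map2 (+) u v \<in> C_Tor n C"
    using C(2) unfolding C_Tor_def vecs_def by auto
qed

lemma C_Res_subset_C_Tor:
  assumes "E_linear n C"
  shows "C_Res C \<subseteq> C_Tor n C"
proof
  fix u assume "u \<in> C_Res C"
  then obtain x where x: "x \<in> C" "u = map piE x" unfolding C_Res_def by auto
  have "map ((*) Zet) x \<in> C" using assms x(1) unfolding E_linear_def by blast
  moreover have "map ((*) Zet) x = map zeta_mult u" unfolding x(2) by (simp add: Zet_mult)
  ultimately show "u \<in> C_Tor n C"
    using assms x unfolding C_Tor_def E_linear_def vecs_def by auto
qed

section \<open>The symplectic duals of an E-linear code\<close>

lemma perpSL_E_code:
  assumes "A \<subseteq> vecs n" "B \<subseteq> vecs n" "B \<noteq> {}"
  shows "perpSL n (E_code n A B) = E_code n (bin_perpS n A) (bin_perpS n A)"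
proof (rule set_eqI)
  fix z
  have "z \<in> perpSL n (E_code n A B) \<longleftrightarrow> z \<in> vecs n \<and> (\<forall>w\<in>E_code n A B.
      symp n (map piE z) (map piE w) = 0 \<and> symp n (map nuE z) (map piE w) = 0)"
    unfolding perpSL_def using symp_eq_zero_iff E_code_subset_vecs unfolding vecs_def by blast
  also have "\<dots> \<longleftrightarrow> z \<in> vecs n \<and> (\<forall>u\<in>A. symp n (map piE z) u = 0 \<and> symp n (map nuE z) u = 0)"
    using ball_E_code_piE[OF assms,
        of "\<lambda>u. symp n (map piE z) u = 0 \<and> symp n (map nuE z) u = 0"] by simp
  also have "\<dots> \<longleftrightarrow> z \<in> E_code n (bin_perpS n A) (bin_perpS n A)"
    unfolding E_code_def bin_perpS_def vecs_def by auto
  finally show "z \<in> perpSL n (E_code n A B) \<longleftrightarrow> z \<in> E_code n (bin_perpS n A) (bin_perpS n A)" .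
qed

lemma perpSR_E_code:
  assumes "A \<subseteq> vecs n" "B \<subseteq> vecs n" "A \<noteq> {}" "B \<noteq> {}"
  shows "perpSR n (E_code n A B) = E_code n (bin_perpS n A \<inter> bin_perpS n B) (vecs n)"
proof (rule set_eqI)
  fix z
  have "z \<in> perpSR n (E_code n A B) \<longleftrightarrow> z \<in> vecs n
      \<and> (\<forall>w\<in>E_code n A B. symp n (map piE w) (map piE z) = 0)
      \<and> (\<forall>w\<in>E_code n A B. symp n (map nuE w) (map piE z) = 0)"
    unfolding perpSR_def using symp_eq_zero_iff E_code_subset_vecs unfolding vecs_def by blast
  also have "\<dots> \<longleftrightarrow> z \<in> vecs n \<and> (\<forall>u\<in>A. symp n u (map piE z) = 0) \<and> (\<forall>v\<in>B. symp n v (map piE z) = 0)"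
    using ball_E_code_piE[OF assms(1,2,4), of "\<lambda>u. symp n u (map piE z) = 0"]
      ball_E_code_nuE[OF assms(1,2,3), of "\<lambda>v. symp n v (map piE z) = 0"] by simp
  also have "\<dots> \<longleftrightarrow> z \<in> E_code n (bin_perpS n A \<inter> bin_perpS n B) (vecs n)"
    unfolding E_code_def bin_perpS_def vecs_def by (auto simp: symp_commute)
  finally show "z \<in> perpSR n (E_code n A B) \<longleftrightarrow> z \<in> E_code n (bin_perpS n A \<inter> bin_perpS n B) (vecs n)" .
qed

lemma perpS_E_code:
  assumes "A \<subseteq> B" "B \<subseteq> vecs n" "A \<noteq> {}"
  shows "perpS n (E_code n A B) = E_code n (bin_perpS n B) (bin_perpS n A)"
proof -
  have "A \<subseteq> vecs n" "B \<noteq> {}" using assms by auto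
  moreover have "bin_perpS n B \<subseteq> bin_perpS n A" using assms(1) by (rule bin_perpS_antimono)
  ultimately show ?thesis
    unfolding perpS_def using assms
    by (simp add: perpSL_E_code perpSR_E_code E_code_inter bin_perpS_subset_vecs Int_absorb1 Int_absorb2)
qed

lemma perpS_perpS:
  assumes "E_linear n C"
  shows "perpS n (perpS n C) = C"
proof -
  define R T where "R = C_Res C" and "T = C_Tor n C"
  have C: "C = E_code n R T"
    unfolding R_def T_def by (rule E_linear_eq_E_code[OF assms])
  have R: "bin_subspace (2 * n) R" and T: "bin_subspace (2 * n) T" and RT: "R \<subseteq> T"
    unfolding R_def T_def using assms
    by (simp_all add: bin_subspace_C_Res bin_subspace_C_Tor C_Res_subset_C_Tor)
  have "perpS n C = E_code n (bin_perpS n T) (bin_perpS n R)"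
    unfolding C by (rule perpS_E_code[OF RT bin_subspace_subset_vecs[OF T] bin_subspace_nonempty[OF R]])
  also have "perpS n \<dots> = E_code n (bin_perpS n (bin_perpS n R)) (bin_perpS n (bin_perpS n T))"
    by (rule perpS_E_code[OF bin_perpS_antimono[OF RT] bin_perpS_subset_vecs
          bin_perpS_nonempty])
  also have "\<dots> = C"
    unfolding C by (simp add: bin_perpS_bin_perpS[OF R] bin_perpS_bin_perpS[OF T])
  finally show ?thesis .
qed

lemma perpSL_perpSL_free:
  assumes "E_linear n C" "free_code n C"
  shows "perpSL n (perpSL n C) = C"
proof -
  define R where "R = C_Res C"
  have C: "C = E_code n R R"
    using E_linear_eq_E_code[OF assms(1)] assms(2) unfolding free_code_def R_def by simp
  have R: "bin_subspace (2 * n) R"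
    unfolding R_def using assms(1) by (rule bin_subspace_C_Res)
  have "perpSL n C = E_code n (bin_perpS n R) (bin_perpS n R)"
    unfolding C by (rule perpSL_E_code[OF bin_subspace_subset_vecs[OF R] bin_subspace_subset_vecs[OF R]
          bin_subspace_nonempty[OF R]])
  also have "perpSL n \<dots> = E_code n (bin_perpS n (bin_perpS n R)) (bin_perpS n (bin_perpS n R))"
    by (rule perpSL_E_code[OF bin_perpS_subset_vecs bin_perpS_subset_vecs
          bin_perpS_nonempty])
  also have "\<dots> = C"
    unfolding C by (simp add: bin_perpS_bin_perpS[OF R])
  finally show ?thesis .
qed

lemma perpSR_full_torsion:
  assumes "E_linear n C" "C_Tor n C = vecs n"
  shows "perpSR n C = E_code n {replicate (2 * n) 0} (vecs n)"
proof -
  define R where "R = C_Res C"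
  have C: "C = E_code n R (vecs n)"
    using E_linear_eq_E_code[OF assms(1)] assms(2) unfolding R_def by simp
  have R: "bin_subspace (2 * n) R"
    unfolding R_def using assms(1) by (rule bin_subspace_C_Res)
  have "perpSR n C = E_code n (bin_perpS n R \<inter> bin_perpS n (vecs n)) (vecs n)"
    unfolding C
    by (rule perpSR_E_code[OF bin_subspace_subset_vecs[OF R] subset_refl bin_subspace_nonempty[OF R]
          vecs_nonempty])
  also have "bin_perpS n R \<inter> bin_perpS n (vecs n) = {replicate (2 * n) 0}"
    using zero_in_bin_perpS by (auto simp: bin_perpS_vecs)
  finally show ?thesis .
qed

lemma perpSR_subset_full_torsion:
  assumes "E_linear n C" "C_Tor n C = vecs n"
  shows "perpSR n C \<subseteq> C"
proof -
  have "replicate (2 * n) 0 \<in> C_Res C"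
    using bin_subspace_C_Res[OF assms(1)] unfolding bin_subspace_def by blast
  then have "E_code n {replicate (2 * n) 0} (vecs n) \<subseteq> E_code n (C_Res C) (C_Tor n C)"
    using assms(2) unfolding E_code_def by auto
  then show ?thesis
    unfolding perpSR_full_torsion[OF assms] by (metis E_linear_eq_E_code[OF assms(1)])
qed

lemma perpSR_zero_residue:
  "perpSR n (E_code n {replicate (2 * n) 0} (vecs n)) = E_code n {replicate (2 * n) 0} (vecs n)"
proof -
  have "perpSR n (E_code n {replicate (2 * n) 0} (vecs n))
      = E_code n (bin_perpS n {replicate (2 * n) 0} \<inter> bin_perpS n (vecs n)) (vecs n)"
    by (rule perpSR_E_code[OF bin_subspace_subset_vecs[OF bin_subspace_zero] subset_refl
          bin_subspace_nonempty[OF bin_subspace_zero] vecs_nonempty])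
  also have "bin_perpS n {replicate (2 * n) 0} \<inter> bin_perpS n (vecs n) = {replicate (2 * n) 0}"
    using bin_subspace_subset_vecs[OF bin_subspace_zero] by (auto simp: bin_perpS_zero bin_perpS_vecs)
  finally show ?thesis .
qed

theorem mainTheorem14:
  fixes n :: nat and C :: "EE list set"
  assumes "E_linear n C"
  shows "(free_code n C \<longrightarrow> LSHull n (perpSL n C) = LSHull n C)
    \<and> ((C_Res C \<inter> bin_perpS n (C_Tor n C) = {replicate (2 * n) 0} \<and> C_Tor n C = vecs n)
         \<longrightarrow> RSHull n (perpSR n C) = RSHull n C)
    \<and> SHull n (perpS n C) = SHull n C"
proof (intro conjI impI)
  show "LSHull n (perpSL n C) = LSHull n C" if "free_code n C"
    using perpSL_perpSL_free[OF assms that] unfolding LSHull_def by blast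
  \<comment> \<open>C_Res \<inter> C_Tor^perp = 0 is automatic once C_Tor is everything, so only the latter is used\<close>
  show "RSHull n (perpSR n C) = RSHull n C"
    if "C_Res C \<inter> bin_perpS n (C_Tor n C) = {replicate (2 * n) 0} \<and> C_Tor n C = vecs n"
  proof -
    have "perpSR n (perpSR n C) = perpSR n C"
      using perpSR_full_torsion[OF assms] perpSR_zero_residue that by simp
    then show ?thesis
      using perpSR_subset_full_torsion[OF assms] that unfolding RSHull_def by auto
  qed
  show "SHull n (perpS n C) = SHull n C"
    using perpS_perpS[OF assms] unfolding SHull_def by blast
qed

end
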